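(* Let $k=\overline{\mathbb Q}$ with the trivial valuation and let $G=\operatorname{Spec}k[T]$ be the additive group (Hopf algebra coproduct $\Delta(T)=T\otimes1+1\otimes T$), with $G^{\mathrm{an}}=\operatorname{Hom}_k(k[T],\mathbb T)$ and Berkovich's hyperoperation $\odot$. For $t\in[-\infty,0)$ let $f_t\in\operatorname{Hom}_k(k[T],\mathbb T)$ be the point given by $f_t(g)=r\cdot t$ for $g\ne0$, where $r\ge0$ is the largest integer with $T^r\mid g$ (with the convention $0\cdot(-\infty)=0$), and $f_t(0)=-\infty$. Then for $x,y\in(-\infty,0)$, every $h\in f_x\odot f_y$ satisfies $\{g: h(g)<0\}=(T)$, and $$f_x\odot f_y=\begin{cases}\{f_{\max\{x,y\}}\}&\text{if }x\ne y,\\ \{f_t: t\in[-\infty,x]\}&\text{if }x=y.\end{cases}$$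
   Context: $\mathbb T=\mathbb R\cup\{-\infty\}$ is the tropical hyperfield: multiplication is usual addition with $-\infty$ absorbing, hyperaddition $s\oplus t=\max\{s,t\}$ if $s\ne t$, $s\oplus s=\{u\in\mathbb T:u\le s\}$. The trivial valuation on $k$ sends nonzero elements to $0$ and $0$ to $-\infty$. $\operatorname{Hom}_k(B,\mathbb T)$ is the set of maps $\varphi:B\to\mathbb T$ with $\varphi(0)=-\infty$, $\varphi(1)=0$, $\varphi(xy)=\varphi(x)+\varphi(y)$, $\varphi(x+y)\in\varphi(x)\oplus\varphi(y)$, restricting to the trivial valuation on $k$. With $A=k[T]$, $j_1(a)=a\otimes1$, $j_2(a)=1\otimes a$, Berkovich's hyperoperation is $g\odot h=\{f\in\operatorname{Hom}_k(A,\mathbb T):\exists\beta\in\operatorname{Hom}_k(A\otimes_kA,\mathbb T)\text{ with }\beta\circ j_1=g,\ \beta\circ j_2=h,\ f=\beta\circ\Delta\}$. *)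

theory Defs
  imports "HOL-Computational_Algebra.Polynomial" "HOL-Library.Extended_Real"
begin

text \<open>The field k = algebraic closure of Q, realised as the algebraic complex numbers.
  k[T] is the set of complex polynomials with algebraic coefficients;
  k[T] tensor k[T] = k[X,Y] is the set of bivariate complex polynomials
  (type complex poly poly: inner variable X = first tensor factor,
  outer variable Y = second tensor factor) with algebraic coefficients.\<close>

definition kQbar :: "complex set" where
  "kQbar = {a. algebraic a}"

definition kT :: "complex poly set" where
  "kT = {p. \<forall>i. coeff p i \<in> kQbar}"

definition kTT :: "complex poly poly set" where
  "kTT = {p. \<forall>i j. coeff (coeff p i) j \<in> kQbar}"

text \<open>Tropical hyperfield T = R \<union> {-\<infinity>}, realised inside ereal (values \<noteq> \<infinity>).
  Tropical multiplication is ereal addition; hyperaddition below.\<close>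

definition trop_hyperadd :: "ereal \<Rightarrow> ereal \<Rightarrow> ereal set" where
  "trop_hyperadd s t = (if s \<noteq> t then {max s t} else {u. u \<le> s})"

text \<open>Hom_k(B,T) for a k-algebra B given as a carrier set S inside a ring,
  with structure map c : k \<rightarrow> B. Maps are extensional (undefined off S).\<close>

definition trop_hom :: "'b::comm_ring_1 set \<Rightarrow> (complex \<Rightarrow> 'b) \<Rightarrow> ('b \<Rightarrow> ereal) \<Rightarrow> bool" where
  "trop_hom S c \<phi> \<longleftrightarrow>
     (\<forall>x\<in>S. \<phi> x \<noteq> \<infinity>) \<and>
     \<phi> 0 = -\<infinity> \<and> \<phi> 1 = 0 \<and>
     (\<forall>x\<in>S. \<forall>y\<in>S. \<phi> (x * y) = \<phi> x + \<phi> y) \<and>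
     (\<forall>x\<in>S. \<forall>y\<in>S. \<phi> (x + y) \<in> trop_hyperadd (\<phi> x) (\<phi> y)) \<and>
     (\<forall>a\<in>kQbar. \<phi> (c a) = (if a = 0 then -\<infinity> else 0)) \<and>
     (\<forall>x. x \<notin> S \<longrightarrow> \<phi> x = undefined)"

definition HomA :: "(complex poly \<Rightarrow> ereal) set" where
  "HomA = {\<phi>. trop_hom kT (\<lambda>a. [:a:]) \<phi>}"

definition HomB :: "(complex poly poly \<Rightarrow> ereal) set" where
  "HomB = {\<phi>. trop_hom kTT (\<lambda>a. [:[:a:]:]) \<phi>}"

text \<open>j1(a) = a \<otimes> 1 = a(X),  j2(a) = 1 \<otimes> a = a(Y).\<close>

definition j1 :: "complex poly \<Rightarrow> complex poly poly" where
  "j1 a = [:a:]"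

definition j2 :: "complex poly \<Rightarrow> complex poly poly" where
  "j2 a = map_poly (\<lambda>c. [:c:]) a"

text \<open>Coproduct of the additive group: \<Delta>(T) = T\<otimes>1 + 1\<otimes>T, i.e. \<Delta>(g) = g(X + Y).\<close>

definition Delta :: "complex poly \<Rightarrow> complex poly poly" where
  "Delta g = poly (map_poly (\<lambda>c. [:[:c:]:]) g) [:[:0, 1:], 1:]"

definition berk_odot :: "(complex poly \<Rightarrow> ereal) \<Rightarrow> (complex poly \<Rightarrow> ereal) \<Rightarrow> (complex poly \<Rightarrow> ereal) set" where
  "berk_odot g h = {f. f \<in> HomA \<and> (\<exists>\<beta>\<in>HomB.
      (\<forall>a\<in>kT. \<beta> (j1 a) = g a) \<and> (\<forall>a\<in>kT. \<beta> (j2 a) = h a) \<and>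
      (\<forall>a\<in>kT. f a = \<beta> (Delta a)))}"

text \<open>The points f_t: f_t(g) = r * t with r = largest r with T^r | g
  (ereal has 0 * (-\<infinity>) = 0), f_t(0) = -\<infinity>.\<close>

definition f_pt :: "ereal \<Rightarrow> complex poly \<Rightarrow> ereal" where
  "f_pt t g = (if g \<in> kT then (if g = 0 then -\<infinity>
      else ereal (real (GREATEST r. [:0, 1:] ^ r dvd g)) * t) else undefined)"

end

theory Submission
  imports Defs
begin

text \<open>
  Every h in f_x \<odot> f_y has s = h(T) = \<beta>(T \<otimes> 1 + 1 \<otimes> T) in x \<oplus> y, so s < 0.
  A tropical point of k[T] with negative value at T is 0 on polynomials with nonzero
  constant term, hence, writing g = T^r u, it equals f_s; in particular it is negative
  exactly on (T).  Conversely, each f_s with s \<in> x \<oplus> y is realised by a valuation of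
  k[X, Y] that restricts to f_x and f_y along the two embeddings: the Gauss valuation
  extending f_x with Y of value y gives f_max(x, y) when x \<noteq> y; when x = y, the Gauss
  valuation with Y of value t \<le> x composed with the substitution Y \<mapsto> Y - X gives f_t,
  and the specialisation Y \<mapsto> -X followed by f_x gives f_-\<infinity>.
\<close>


section \<open>Algebraic numbers and the rings k[T] and k[X, Y]\<close>

interpretation rat_span: vector_space "\<lambda>(q::rat) (z::complex). of_rat q * z"
  by unfold_locales (auto simp: algebra_simps of_rat_add of_rat_mult)

lemma span_mult_left:
  assumes "w \<in> rat_span.span A"
  shows "c * w \<in> rat_span.span ((*) c ` A)"
  using assms
proof (induct rule: rat_span.span_induct_alt)
  case base then show ?case by (simp add: rat_span.span_zero)
next
  case (step q a w)
  have "c * (of_rat q * a + w) = of_rat q * (c * a) + c * w" by (simp add: algebra_simps)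
  moreover have "c * a \<in> rat_span.span ((*) c ` A)" using step by (intro rat_span.span_base) auto
  ultimately show ?case using step by (simp add: rat_span.span_add rat_span.span_scale)
qed

lemma span_mult:
  assumes "u \<in> rat_span.span A" and "w \<in> rat_span.span B"
  shows "u * w \<in> rat_span.span {a * b | a b. a \<in> A \<and> b \<in> B}"
  using assms(1)
proof (induct rule: rat_span.span_induct_alt)
  case base then show ?case by (simp add: rat_span.span_zero)
next
  case (step q a u)
  have "a * w \<in> rat_span.span ((*) a ` B)" by (rule span_mult_left[OF assms(2)])
  moreover have "(*) a ` B \<subseteq> {a * b | a b. a \<in> A \<and> b \<in> B}" using step by auto
  ultimately have "a * w \<in> rat_span.span {a * b | a b. a \<in> A \<and> b \<in> B}"
    using rat_span.span_mono by blast
  moreover have "(of_rat q * a + u) * w = of_rat q * (a * w) + u * w" by (simp add: algebra_simps)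
  ultimately show ?case using step by (simp add: rat_span.span_add rat_span.span_scale)
qed

lemma span_mult_closed:
  assumes "\<And>b. b \<in> B \<Longrightarrow> z * b \<in> rat_span.span B" and "w \<in> rat_span.span B"
  shows "z * w \<in> rat_span.span B"
  using assms(2)
proof (induct rule: rat_span.span_induct_alt)
  case base then show ?case by (simp add: rat_span.span_zero)
next
  case (step q b w)
  have "z * (of_rat q * b + w) = of_rat q * (z * b) + z * w" by (simp add: algebra_simps)
  then show ?case using step assms(1) by (simp add: rat_span.span_add rat_span.span_scale)
qed

text \<open>The powers z^0, ..., z^(card B) all lie in the span of B and are therefore
  linearly dependent over \<rat>.\<close>

lemma algebraic_if_mult_preserves_span:
  assumes fin: "finite B" and one: "1 \<in> rat_span.span B"
    and closed: "\<And>b. b \<in> B \<Longrightarrow> z * b \<in> rat_span.span B"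
  shows "algebraic z"
proof (cases "inj_on ((^) z) {..card B}")
  case False
  then obtain i j where ij: "i \<noteq> j" "z ^ i = z ^ j"
    unfolding inj_on_def by auto
  define p :: "complex poly" where "p = monom 1 i - monom 1 j"
  have "coeff p i \<noteq> 0" using ij(1) by (simp add: p_def)
  then have "p \<noteq> 0" by auto
  moreover have "poly p z = 0" using ij(2) by (simp add: p_def poly_monom)
  moreover have "coeff p n \<in> \<int>" for n by (simp add: p_def)
  ultimately show ?thesis by (intro algebraicI[of p]) auto
next
  case True
  define S where "S = (^) z ` {..card B}"
  have "z ^ k \<in> rat_span.span B" for k
    by (induct k) (use one span_mult_closed[OF closed] in auto)
  then have "S \<subseteq> rat_span.span B" by (auto simp: S_def)
  moreover have "card B < card S" using True by (simp add: S_def card_image)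
  ultimately have "rat_span.dependent S"
    using rat_span.independent_span_bound[OF fin] by fastforce
  then obtain u where u: "\<exists>v\<in>S. u v \<noteq> 0" "(\<Sum>v\<in>S. of_rat (u v) * v) = 0"
    using rat_span.dependent_finite[of S] by (auto simp: S_def)
  define p :: "complex poly" where "p = (\<Sum>k\<le>card B. monom (of_rat (u (z ^ k))) k)"
  have coeff_p: "coeff p n = (if n \<le> card B then of_rat (u (z ^ n)) else 0)" for n
    by (simp add: p_def coeff_sum)
  have "poly p z = (\<Sum>k\<le>card B. of_rat (u (z ^ k)) * z ^ k)"
    by (simp add: p_def poly_sum poly_monom)
  also have "\<dots> = (\<Sum>v\<in>S. of_rat (u v) * v)"
    unfolding S_def by (subst sum.reindex[OF True]) simp
  finally have "poly p z = 0" using u(2) by simp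
  moreover from u(1) obtain k where "k \<le> card B" "u (z ^ k) \<noteq> 0" by (auto simp: S_def)
  then have "p \<noteq> 0" using coeff_p[of k] by auto
  moreover have "coeff p n \<in> \<rat>" for n by (simp add: coeff_p)
  ultimately show ?thesis by (intro algebraicI'[of p]) auto
qed

lemma algebraic_power_degree_in_span:
  assumes "algebraic x"
  obtains m where "0 < m" "x ^ m \<in> rat_span.span ((^) x ` {..<m})"
proof -
  obtain p where p: "\<forall>i. coeff p i \<in> \<rat>" "p \<noteq> 0" "poly p x = 0"
    using assms unfolding algebraic_altdef by auto
  define m where "m = degree p"
  have "\<forall>i. \<exists>q. coeff p i = of_rat q" using p(1) by (auto simp: Rats_def)
  then obtain c where c: "\<And>i. coeff p i = of_rat (c i)" by metis
  have "coeff p m \<noteq> 0" using p(2) by (simp add: m_def)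
  then have cm: "c m \<noteq> 0" using c by auto
  have "m > 0"
  proof (rule ccontr)
    assume "\<not> m > 0"
    then show False using p(3) \<open>coeff p m \<noteq> 0\<close> by (simp add: poly_altdef m_def)
  qed
  have "0 = (\<Sum>i<Suc m. of_rat (c i) * x ^ i)"
    using p(3) by (simp add: poly_altdef m_def c lessThan_Suc_atMost)
  then have "of_rat (c m) * x ^ m = - (\<Sum>i<m. of_rat (c i) * x ^ i)"
    by (simp add: eq_neg_iff_add_eq_0 add.commute)
  then have "x ^ m = - (\<Sum>i<m. of_rat (c i) * x ^ i) / of_rat (c m)"
    using cm by (simp add: field_simps)
  also have "\<dots> = (\<Sum>i<m. of_rat (- c i / c m) * x ^ i)"
    by (simp add: of_rat_minus of_rat_divide sum_divide_distrib sum_negf)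
  also have "\<dots> \<in> rat_span.span ((^) x ` {..<m})"
    by (intro rat_span.span_sum rat_span.span_scale rat_span.span_base) auto
  finally show thesis using \<open>m > 0\<close> that by blast
qed

lemma algebraic_powers_in_span:
  assumes "algebraic x"
  obtains m where "\<And>k. x ^ k \<in> rat_span.span ((^) x ` {..<m})"
proof -
  obtain m where m: "0 < m" "x ^ m \<in> rat_span.span ((^) x ` {..<m})"
    using algebraic_power_degree_in_span[OF assms] by blast
  let ?V = "rat_span.span ((^) x ` {..<m})"
  have shift: "x * b \<in> ?V" if b: "b \<in> (^) x ` {..<m}" for b
  proof -
    obtain i where i: "i < m" "b = x ^ i" using b by blast
    show ?thesis
    proof (cases "Suc i < m")
      case True
      then have "x * b \<in> (^) x ` {..<m}" using i by (metis image_eqI lessThan_iff power_Suc)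
      then show ?thesis by (rule rat_span.span_base)
    next
      case False
      then have "m = Suc i" using i(1) by simp
      then show ?thesis using i(2) m(2) by simp
    qed
  qed
  have "x ^ k \<in> ?V" for k
  proof (induct k)
    case 0
    from \<open>m > 0\<close> show ?case by (intro rat_span.span_base image_eqI[of _ _ 0]) auto
  next
    case (Suc k) then show ?case using span_mult_closed[OF shift] by simp
  qed
  then show thesis by (rule that)
qed

lemma
  fixes x y :: complex
  assumes "algebraic x" and "algebraic y"
  shows algebraic_add: "algebraic (x + y)" and algebraic_mult: "algebraic (x * y)"
proof -
  obtain m where m: "\<And>k. x ^ k \<in> rat_span.span ((^) x ` {..<m})"
    using algebraic_powers_in_span[OF assms(1)] by blast
  obtain n where n: "\<And>k. y ^ k \<in> rat_span.span ((^) y ` {..<n})"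
    using algebraic_powers_in_span[OF assms(2)] by blast
  define B where "B = {a * b | a b. a \<in> (^) x ` {..<m} \<and> b \<in> (^) y ` {..<n}}"
  have fin: "finite B" unfolding B_def by (simp add: finite_image_set2)
  have mono: "x ^ i * y ^ j \<in> rat_span.span B" for i j
    unfolding B_def by (rule span_mult[OF m n])
  have "1 \<in> rat_span.span B" using mono[of 0 0] by simp
  moreover have "B \<subseteq> {x ^ i * y ^ j | i j. True}" by (auto simp: B_def)
  moreover have "(x + y) * (x ^ i * y ^ j) \<in> rat_span.span B" for i j
  proof -
    have "(x + y) * (x ^ i * y ^ j) = x ^ Suc i * y ^ j + x ^ i * y ^ Suc j"
      by (simp add: algebra_simps)
    then show ?thesis by (simp only:) (rule rat_span.span_add[OF mono mono])
  qed
  moreover have "(x * y) * (x ^ i * y ^ j) \<in> rat_span.span B" for i j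
    using mono[of "Suc i" "Suc j"] by (simp add: algebra_simps)
  ultimately show "algebraic (x + y)" "algebraic (x * y)"
    using algebraic_if_mult_preserves_span[OF fin] by blast+
qed

lemma kQbar_add: "a \<in> kQbar \<Longrightarrow> b \<in> kQbar \<Longrightarrow> a + b \<in> kQbar"
  and kQbar_mult: "a \<in> kQbar \<Longrightarrow> b \<in> kQbar \<Longrightarrow> a * b \<in> kQbar"
  by (auto simp: kQbar_def algebraic_add algebraic_mult)

lemma kQbar_sum: "finite A \<Longrightarrow> (\<And>a. a \<in> A \<Longrightarrow> f a \<in> kQbar) \<Longrightarrow> sum f A \<in> kQbar"
  by (induct A rule: finite_induct) (auto simp: kQbar_def algebraic_add algebraic_mult)

lemma kQbar_0 [simp]: "0 \<in> kQbar" and kQbar_1 [simp]: "1 \<in> kQbar"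
  by (auto simp: kQbar_def)

lemma kT_add: "p \<in> kT \<Longrightarrow> q \<in> kT \<Longrightarrow> p + q \<in> kT"
  by (auto simp: kT_def intro: kQbar_add)

lemma kT_mult: "p \<in> kT \<Longrightarrow> q \<in> kT \<Longrightarrow> p * q \<in> kT"
  unfolding kT_def by (auto simp: coeff_mult intro!: kQbar_sum kQbar_mult)

lemma kT_pCons [simp]: "pCons a p \<in> kT \<longleftrightarrow> a \<in> kQbar \<and> p \<in> kT"
  unfolding kT_def by (auto simp: coeff_pCons split: nat.splits)

lemma kT_0 [simp]: "0 \<in> kT" and kT_1 [simp]: "1 \<in> kT" and kT_X [simp]: "[:0, 1:] \<in> kT"
  by (auto simp: kT_def coeff_pCons split: nat.splits)

lemma kT_sum: "finite A \<Longrightarrow> (\<And>a. a \<in> A \<Longrightarrow> f a \<in> kT) \<Longrightarrow> sum f A \<in> kT"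
  by (induct A rule: finite_induct) (auto intro: kT_add)

lemma kT_power: "p \<in> kT \<Longrightarrow> p ^ n \<in> kT"
  by (induct n) (auto intro: kT_mult)

lemma kTT_iff: "P \<in> kTT \<longleftrightarrow> (\<forall>i. coeff P i \<in> kT)"
  by (simp add: kTT_def kT_def)

lemma kTT_add: "P \<in> kTT \<Longrightarrow> Q \<in> kTT \<Longrightarrow> P + Q \<in> kTT"
  by (auto simp: kTT_iff intro: kT_add)

lemma kTT_mult: "P \<in> kTT \<Longrightarrow> Q \<in> kTT \<Longrightarrow> P * Q \<in> kTT"
  unfolding kTT_iff by (auto simp: coeff_mult intro!: kT_sum kT_mult)

lemma kTT_pCons [simp]: "pCons a P \<in> kTT \<longleftrightarrow> a \<in> kT \<and> P \<in> kTT"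
  unfolding kTT_iff by (auto simp: coeff_pCons split: nat.splits)

lemma kTT_0 [simp]: "0 \<in> kTT" and kTT_1 [simp]: "1 \<in> kTT"
  by (auto simp: kTT_iff)


section \<open>Tropical valuations\<close>

lemma trop_hyperadd_iff: "u \<in> trop_hyperadd s t \<longleftrightarrow> u \<le> max s t \<and> (s \<noteq> t \<longrightarrow> u = max s t)"
  by (auto simp: trop_hyperadd_def)

locale trop_valuation =
  fixes v :: "'r::comm_ring_1 \<Rightarrow> ereal"
  assumes zero [simp]: "v 0 = -\<infinity>"
    and one [simp]: "v 1 = 0"
    and not_PInf: "v p \<noteq> \<infinity>"
    and mult: "v (p * q) = v p + v q"
    and add: "v (p + q) \<in> trop_hyperadd (v p) (v q)"
begin

lemma add_le_max: "v (p + q) \<le> max (v p) (v q)"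
  using add[of p q] by (simp add: trop_hyperadd_iff)

lemma add_eq_max: "v p \<noteq> v q \<Longrightarrow> v (p + q) = max (v p) (v q)"
  using add[of p q] by (simp add: trop_hyperadd_iff)

lemma sum_le_Max:
  assumes "finite A" "A \<noteq> {}"
  shows "v (sum f A) \<le> Max ((\<lambda>i. v (f i)) ` A)"
  using assms
proof (induct A rule: finite_ne_induct)
  case (insert x F)
  have "v (sum f (insert x F)) \<le> max (v (f x)) (v (sum f F))"
    using insert by (simp add: add_le_max)
  also have "\<dots> \<le> max (v (f x)) (Max ((\<lambda>i. v (f i)) ` F))"
    using insert by (simp add: max.coboundedI2)
  finally show ?case using insert by simp
qed simp

lemma sum_eq_dominant:
  assumes "finite A" "i0 \<in> A" "\<And>i. i \<in> A \<Longrightarrow> i \<noteq> i0 \<Longrightarrow> v (f i) < v (f i0)"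
  shows "v (sum f A) = v (f i0)"
proof (cases "A - {i0} = {}")
  case True
  then have "A = {i0}" using assms(2) by auto
  then show ?thesis by simp
next
  case False
  have "v (sum f (A - {i0})) \<le> Max ((\<lambda>i. v (f i)) ` (A - {i0}))"
    using assms(1) False by (intro sum_le_Max) auto
  also have "\<dots> < v (f i0)"
    using assms False by (subst Max_less_iff) auto
  finally have "v (f i0 + sum f (A - {i0})) = v (f i0)"
    by (subst add_eq_max) auto
  then show ?thesis using assms(1,2) by (simp add: sum.remove)
qed

end

lemma trop_valuation_comp:
  assumes "trop_valuation v" "h 0 = 0" "h 1 = 1"
    "\<And>p q. h (p * q) = h p * h q" "\<And>p q. h (p + q) = h p + h q"
  shows "trop_valuation (\<lambda>p. v (h p))"
  using assms unfolding trop_valuation_def by auto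

lemma order_add_ge:
  fixes p q :: "'a::idom poly"
  assumes "p + q \<noteq> 0"
  shows "min (order a p) (order a q) \<le> order a (p + q)"
proof -
  let ?k = "min (order a p) (order a q)"
  have "[:-a, 1:] ^ ?k dvd p" "[:-a, 1:] ^ ?k dvd q"
    by (simp_all add: order_divides)
  then have "[:-a, 1:] ^ ?k dvd p + q" by (rule dvd_add)
  then show ?thesis using assms by (simp add: order_divides)
qed

lemma order_add_eq_min:
  fixes p q :: "'a::idom poly"
  assumes "p \<noteq> 0" "order a p < order a q"
  shows "p + q \<noteq> 0" and "order a (p + q) = order a p"
proof -
  show pq: "p + q \<noteq> 0"
  proof
    assume "p + q = 0"
    then have "q = - p" by (simp add: eq_neg_iff_add_eq_0 add.commute)
    then show False using assms(2) by simp
  qed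
  have "\<not> [:-a, 1:] ^ Suc (order a p) dvd p + q"
  proof
    assume "[:-a, 1:] ^ Suc (order a p) dvd p + q"
    moreover have "[:-a, 1:] ^ Suc (order a p) dvd q"
      using assms(2) order_divides[of a "Suc (order a p)" q] by simp
    ultimately have "[:-a, 1:] ^ Suc (order a p) dvd (p + q) - q"
      by (rule dvd_diff)
    then have "[:-a, 1:] ^ Suc (order a p) dvd p" by simp
    then show False using assms(1) by (simp only: order_divides) simp
  qed
  then have "order a (p + q) \<le> order a p" using pq by (simp only: order_divides) simp
  moreover have "order a p \<le> order a (p + q)" using order_add_ge[OF pq, of a] assms(2) by simp
  ultimately show "order a (p + q) = order a p" by simp
qed

text \<open>On k[T] this valuation is the point f_a of the statement.\<close>

definition ord0_val :: "real \<Rightarrow> 'a::idom poly \<Rightarrow> ereal" where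
  "ord0_val a p = (if p = 0 then -\<infinity> else ereal (real (order 0 p) * a))"

lemma order_0_X: "order 0 [:0, 1::'a::idom:] = 1"
  using order_power_n_n[of "0::'a" 1] by simp

lemma ord0_val_0 [simp]: "ord0_val a 0 = -\<infinity>"
  by (simp add: ord0_val_def)

lemma ord0_val_X: "c \<noteq> 0 \<Longrightarrow> ord0_val a [:0, c:] = ereal a"
  using order_smult[of c 0 "[:0, 1:]"] by (simp add: ord0_val_def order_0_X)

lemma ord0_val_const: "c \<noteq> 0 \<Longrightarrow> ord0_val a [:c:] = 0"
  by (simp add: ord0_val_def order_0I)

lemma ord0_val_add:
  fixes p q :: "'a::idom poly"
  assumes "a \<le> 0"
  shows "ord0_val a (p + q) \<in> trop_hyperadd (ord0_val a p) (ord0_val a q)"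
proof -
  have anti: "ereal (real m * a) \<le> ereal (real n * a)" if "n \<le> m" for m n
    using that assms by (simp add: mult_right_mono_neg)
  consider "p = 0 \<or> q = 0" | "p \<noteq> 0" "q \<noteq> 0" "q = - p"
    | "p \<noteq> 0" "q \<noteq> 0" "order 0 p < order 0 q" | "p \<noteq> 0" "q \<noteq> 0" "order 0 q < order 0 p"
    | "p \<noteq> 0" "q \<noteq> 0" "p + q \<noteq> 0" "order 0 p = order 0 q"
    by (metis add_eq_0_iff linorder_neqE_nat)
  then show ?thesis
  proof cases
    case 1 then show ?thesis by (auto simp: trop_hyperadd_def ord0_val_def)
  next
    case 2 then show ?thesis by (simp add: trop_hyperadd_def ord0_val_def)
  next
    case 3
    then have "ord0_val a (p + q) = ord0_val a p" "ord0_val a q \<le> ord0_val a p"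
      using order_add_eq_min[of p 0 q] anti[of "order 0 p" "order 0 q"] by (auto simp: ord0_val_def)
    then show ?thesis by (auto simp: trop_hyperadd_iff max_def)
  next
    case 4
    then have "ord0_val a (p + q) = ord0_val a q" "ord0_val a p \<le> ord0_val a q"
      using order_add_eq_min[of q 0 p] anti[of "order 0 q" "order 0 p"]
      by (auto simp: ord0_val_def add.commute)
    then show ?thesis by (auto simp: trop_hyperadd_iff max_def)
  next
    case 5
    then have "ord0_val a (p + q) \<le> ord0_val a p"
      using order_add_ge[of p q 0] anti[of "order 0 p" "order 0 (p + q)"] by (auto simp: ord0_val_def)
    then show ?thesis using 5 by (auto simp: trop_hyperadd_def ord0_val_def)
  qed
qed

lemma trop_valuation_ord0_val:
  assumes "a \<le> 0"
  shows "trop_valuation (ord0_val a :: 'a::idom poly \<Rightarrow> ereal)"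
proof
  fix p q :: "'a poly"
  show "ord0_val a 0 = -\<infinity>" "ord0_val a 1 = 0" "ord0_val a p \<noteq> \<infinity>"
    by (simp_all add: ord0_val_def)
  show "ord0_val a (p * q) = ord0_val a p + ord0_val a q"
    by (auto simp: ord0_val_def order_mult distrib_right)
  show "ord0_val a (p + q) \<in> trop_hyperadd (ord0_val a p) (ord0_val a q)"
    using assms by (rule ord0_val_add)
qed


section \<open>The Gauss extension of a tropical valuation\<close>

lemma ereal_add_less_le_mono:
  fixes a b c d :: ereal
  assumes "a < c" "b \<le> d" "\<bar>c\<bar> \<noteq> \<infinity>" "\<bar>d\<bar> \<noteq> \<infinity>"
  shows "a + b < c + d"
proof -
  have "a + b \<le> a + d" using assms(2) by (rule add_left_mono)
  also have "\<dots> < c + d" using ereal_less_add[OF assms(4,1)] by (simp add: add.commute)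
  finally show ?thesis .
qed

lemma ereal_add_real_less_iff: "a + ereal r < b + ereal r \<longleftrightarrow> a < b"
  by (cases a; cases b) auto

definition gauss_term :: "('r::zero \<Rightarrow> ereal) \<Rightarrow> real \<Rightarrow> 'r poly \<Rightarrow> nat \<Rightarrow> ereal" where
  "gauss_term v b P j = v (coeff P j) + ereal (real j * b)"

definition gauss_val :: "('r::zero \<Rightarrow> ereal) \<Rightarrow> real \<Rightarrow> 'r poly \<Rightarrow> ereal" where
  "gauss_val v b P = Max (gauss_term v b P ` {..degree P})"

context trop_valuation
begin

lemma gauss_term_above_degree: "degree P < j \<Longrightarrow> gauss_term v b P j = -\<infinity>"
  by (simp add: gauss_term_def coeff_eq_0)

lemma gauss_term_le: "gauss_term v b P j \<le> gauss_val v b P"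
proof (cases "j \<le> degree P")
  case True then show ?thesis unfolding gauss_val_def by (intro Max_ge) auto
next
  case False then show ?thesis by (simp add: gauss_term_above_degree)
qed

lemma gauss_val_le: "(\<And>j. gauss_term v b P j \<le> c) \<Longrightarrow> gauss_val v b P \<le> c"
  unfolding gauss_val_def by (subst Max_le_iff) auto

lemma gauss_val_attained: "\<exists>j. gauss_term v b P j = gauss_val v b P"
proof -
  have "gauss_val v b P \<in> gauss_term v b P ` {..degree P}"
    unfolding gauss_val_def by (intro Max_in) auto
  then show ?thesis by auto
qed

lemma gauss_val_last_attained:
  assumes "gauss_val v b P \<noteq> -\<infinity>"
  obtains J where "gauss_term v b P J = gauss_val v b P"
    and "\<And>j. J < j \<Longrightarrow> gauss_term v b P j < gauss_val v b P"
proof -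
  define S where "S = {j. j \<le> degree P \<and> gauss_term v b P j = gauss_val v b P}"
  have "finite S" by (simp add: S_def)
  moreover have "S \<noteq> {}"
    using gauss_val_attained[of b P] assms
    by (auto simp: S_def) (metis gauss_term_above_degree not_le)
  ultimately have J: "Max S \<in> S" "\<And>j. j \<in> S \<Longrightarrow> j \<le> Max S" by auto
  show thesis
  proof (rule that)
    show "gauss_term v b P (Max S) = gauss_val v b P" using J(1) by (simp add: S_def)
    fix j assume "Max S < j"
    then have "j \<notin> S" using J(2) by fastforce
    moreover have "gauss_term v b P j \<noteq> gauss_val v b P" if "degree P < j"
      using that assms by (simp add: gauss_term_above_degree)
    ultimately show "gauss_term v b P j < gauss_val v b P"
      using gauss_term_le[of b P j] by (auto simp: S_def not_le order.order_iff_strict)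
  qed
qed

lemma gauss_val_0: "gauss_val v b 0 = -\<infinity>"
  by (simp add: gauss_val_def gauss_term_def)

lemma gauss_val_const: "gauss_val v b [:p:] = v p"
  by (simp add: gauss_val_def gauss_term_def)

lemma gauss_val_linear: "gauss_val v b [:c, 1:] = max (v c) (ereal b)"
  by (simp add: gauss_val_def gauss_term_def atMost_Suc max.commute)

lemma gauss_val_X: "gauss_val v b [:0, 1:] = ereal b"
  using gauss_val_linear[of b 0] by simp

lemma gauss_val_not_PInf: "gauss_val v b P \<noteq> \<infinity>"
proof -
  obtain j where "gauss_term v b P j = gauss_val v b P" using gauss_val_attained by blast
  moreover have "gauss_term v b P j \<noteq> \<infinity>"
    using not_PInf[of "coeff P j"] by (cases "v (coeff P j)") (auto simp: gauss_term_def)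
  ultimately show ?thesis by simp
qed

lemma gauss_term_mult_coeffs:
  assumes "i \<le> n"
  shows "v (coeff P i * coeff Q (n - i)) + ereal (real n * b)
    = gauss_term v b P i + gauss_term v b Q (n - i)"
proof -
  have "real n * b = real i * b + real (n - i) * b" using assms by (simp add: distrib_right[symmetric])
  then show ?thesis by (simp add: gauss_term_def mult add_ac)
qed

lemma gauss_val_mult_le: "gauss_val v b (P * Q) \<le> gauss_val v b P + gauss_val v b Q"
proof (rule gauss_val_le)
  fix n
  have "Max ((\<lambda>i. v (coeff P i * coeff Q (n - i))) ` {..n})
      \<in> (\<lambda>i. v (coeff P i * coeff Q (n - i))) ` {..n}"
    by (intro Max_in) auto
  then obtain i where i: "i \<le> n"
    "Max ((\<lambda>i. v (coeff P i * coeff Q (n - i))) ` {..n}) = v (coeff P i * coeff Q (n - i))"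
    by blast
  have "v (coeff (P * Q) n) \<le> v (coeff P i * coeff Q (n - i))"
    unfolding coeff_mult i(2)[symmetric] by (rule sum_le_Max) auto
  then have "gauss_term v b (P * Q) n \<le> v (coeff P i * coeff Q (n - i)) + ereal (real n * b)"
    unfolding gauss_term_def by (rule add_right_mono)
  also have "\<dots> \<le> gauss_val v b P + gauss_val v b Q"
    using i(1) by (simp add: gauss_term_mult_coeffs add_mono gauss_term_le)
  finally show "gauss_term v b (P * Q) n \<le> gauss_val v b P + gauss_val v b Q" .
qed

text \<open>The product of the last maximal terms of P and Q strictly dominates every
  other contribution to the same coefficient of P Q.\<close>

lemma gauss_term_mult_at_last_attained:
  assumes J1: "gauss_term v b P J1 = gauss_val v b P"
      "\<And>j. J1 < j \<Longrightarrow> gauss_term v b P j < gauss_val v b P"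
    and J2: "gauss_term v b Q J2 = gauss_val v b Q"
      "\<And>j. J2 < j \<Longrightarrow> gauss_term v b Q j < gauss_val v b Q"
    and fin: "\<bar>gauss_val v b P\<bar> \<noteq> \<infinity>" "\<bar>gauss_val v b Q\<bar> \<noteq> \<infinity>"
  shows "gauss_term v b (P * Q) (J1 + J2) = gauss_val v b P + gauss_val v b Q"
proof -
  let ?gP = "gauss_val v b P" and ?gQ = "gauss_val v b Q"
  define n where "n = J1 + J2"
  have top: "v (coeff P J1 * coeff Q (n - J1)) + ereal (real n * b) = ?gP + ?gQ"
    using gauss_term_mult_coeffs[of J1 n P Q] J1(1) J2(1) by (simp add: n_def)
  have other: "gauss_term v b P i + gauss_term v b Q (n - i) < ?gP + ?gQ"
    if "i \<le> n" "i \<noteq> J1" for i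
  proof (cases "J1 < i")
    case True
    then show ?thesis using J1(2) gauss_term_le[of b Q] fin by (intro ereal_add_less_le_mono) auto
  next
    case False
    then have "J2 < n - i" using that by (simp add: n_def)
    then have "gauss_term v b Q (n - i) + gauss_term v b P i < ?gQ + ?gP"
      using J2(2) gauss_term_le[of b P] fin by (intro ereal_add_less_le_mono) auto
    then show ?thesis by (simp add: add.commute)
  qed
  have "v (coeff (P * Q) n) = v (coeff P J1 * coeff Q (n - J1))"
    unfolding coeff_mult
  proof (rule sum_eq_dominant)
    fix i assume "i \<in> {..n}" "i \<noteq> J1"
    then have "v (coeff P i * coeff Q (n - i)) + ereal (real n * b)
        < v (coeff P J1 * coeff Q (n - J1)) + ereal (real n * b)"
      using other[of i] gauss_term_mult_coeffs[of i n P Q] top by simp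
    then show "v (coeff P i * coeff Q (n - i)) < v (coeff P J1 * coeff Q (n - J1))"
      by (simp only: ereal_add_real_less_iff)
  qed (auto simp: n_def)
  then show ?thesis using top by (simp add: gauss_term_def n_def)
qed

lemma gauss_val_mult: "gauss_val v b (P * Q) = gauss_val v b P + gauss_val v b Q"
proof (cases "gauss_val v b P = -\<infinity> \<or> gauss_val v b Q = -\<infinity>")
  case True
  then show ?thesis
    using gauss_val_mult_le[of b P Q] gauss_val_not_PInf[of b P] gauss_val_not_PInf[of b Q]
    by (cases "gauss_val v b P"; cases "gauss_val v b Q") auto
next
  case False
  obtain J1 where J1: "gauss_term v b P J1 = gauss_val v b P"
    "\<And>j. J1 < j \<Longrightarrow> gauss_term v b P j < gauss_val v b P"
    using gauss_val_last_attained False by metis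
  obtain J2 where J2: "gauss_term v b Q J2 = gauss_val v b Q"
    "\<And>j. J2 < j \<Longrightarrow> gauss_term v b Q j < gauss_val v b Q"
    using gauss_val_last_attained False by metis
  have "\<bar>gauss_val v b P\<bar> \<noteq> \<infinity>" "\<bar>gauss_val v b Q\<bar> \<noteq> \<infinity>"
    using False gauss_val_not_PInf by auto
  from gauss_term_mult_at_last_attained[OF J1 J2 this]
  show ?thesis using gauss_term_le[of b "P * Q" "J1 + J2"] gauss_val_mult_le[of b P Q] by simp
qed

lemma gauss_term_add_le: "gauss_term v b (P + Q) j \<le> max (gauss_term v b P j) (gauss_term v b Q j)"
proof -
  have "v (coeff P j + coeff Q j) + ereal (real j * b)
      \<le> max (v (coeff P j)) (v (coeff Q j)) + ereal (real j * b)"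
    using add_le_max by (rule add_right_mono)
  then show ?thesis by (auto simp: gauss_term_def max_def ereal_add_le_add_iff2 split: if_splits)
qed

lemma gauss_val_add_le: "gauss_val v b (P + Q) \<le> max (gauss_val v b P) (gauss_val v b Q)"
  using gauss_term_add_le gauss_term_le
  by (intro gauss_val_le) (meson max.mono order_trans)

lemma gauss_val_add_dominant:
  assumes "gauss_val v b Q < gauss_val v b P"
  shows "gauss_val v b (P + Q) = gauss_val v b P"
proof -
  obtain j where j: "gauss_term v b P j = gauss_val v b P" using gauss_val_attained by blast
  then have "gauss_term v b Q j < gauss_term v b P j" using gauss_term_le[of b Q j] assms by simp
  then have "v (coeff Q j) < v (coeff P j)" by (simp add: gauss_term_def ereal_add_real_less_iff)
  then have "v (coeff P j + coeff Q j) = v (coeff P j)" by (simp add: add_eq_max)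
  then have "gauss_term v b (P + Q) j = gauss_val v b P" using j by (simp add: gauss_term_def)
  then show ?thesis using gauss_val_add_le[of b P Q] gauss_term_le[of b "P + Q" j] assms by simp
qed

lemma trop_valuation_gauss_val: "trop_valuation (gauss_val v b)"
proof
  fix P Q
  show "gauss_val v b 0 = -\<infinity>" by (rule gauss_val_0)
  show "gauss_val v b 1 = 0" using gauss_val_const[of b 1] by (simp add: one_pCons)
  show "gauss_val v b P \<noteq> \<infinity>" by (rule gauss_val_not_PInf)
  show "gauss_val v b (P * Q) = gauss_val v b P + gauss_val v b Q" by (rule gauss_val_mult)
  show "gauss_val v b (P + Q) \<in> trop_hyperadd (gauss_val v b P) (gauss_val v b Q)"
    unfolding trop_hyperadd_iff
    using gauss_val_add_le gauss_val_add_dominant[of b Q P] gauss_val_add_dominant[of b P Q]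
    by (auto simp: max_def add.commute neq_iff)
qed

end


section \<open>Tropical points of k[T] with negative value at T\<close>

lemma f_pt_eq_order: "g \<in> kT \<Longrightarrow> g \<noteq> 0 \<Longrightarrow> f_pt t g = ereal (real (order 0 g)) * t"
proof -
  assume "g \<in> kT" "g \<noteq> 0"
  moreover have "(GREATEST r. [:0, 1:] ^ r dvd g) = order 0 g"
    using \<open>g \<noteq> 0\<close> order_divides[of 0 _ g] by (intro Greatest_equality) auto
  ultimately show ?thesis by (simp add: f_pt_def)
qed

lemma f_pt_X: "f_pt t [:0, 1:] = t"
  by (simp add: f_pt_eq_order order_0_X)

lemma kT_X_power_mult_cancel: "[:0, 1:] ^ r * q \<in> kT \<Longrightarrow> q \<in> kT"
proof -
  assume "[:0, 1:] ^ r * q \<in> kT"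
  then have "coeff ([:0, 1:] ^ r * q) (i + r) \<in> kQbar" for i by (simp add: kT_def)
  moreover have "[:0, 1:] ^ r = (monom 1 r :: complex poly)" by (simp add: monom_altdef)
  ultimately show "q \<in> kT" by (simp add: kT_def coeff_monom_mult)
qed

locale kT_trop_point =
  fixes \<phi> :: "complex poly \<Rightarrow> ereal" and s :: ereal
  assumes mult: "\<And>g h. g \<in> kT \<Longrightarrow> h \<in> kT \<Longrightarrow> \<phi> (g * h) = \<phi> g + \<phi> h"
    and add: "\<And>g h. g \<in> kT \<Longrightarrow> h \<in> kT \<Longrightarrow> \<phi> (g + h) \<in> trop_hyperadd (\<phi> g) (\<phi> h)"
    and const: "\<And>a. a \<in> kQbar \<Longrightarrow> \<phi> [:a:] = (if a = 0 then -\<infinity> else 0)"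
    and X: "\<phi> [:0, 1:] = s"
    and s_neg: "s < 0"
begin

lemma pCons_hyperadd:
  "a \<in> kQbar \<Longrightarrow> p \<in> kT \<Longrightarrow> \<phi> (pCons a p) \<in> trop_hyperadd (\<phi> [:a:]) (s + \<phi> p)"
  using add[of "[:a:]" "[:0, 1:] * p"] mult[of "[:0, 1:]" p] X by simp

lemma nonpos: "g \<in> kT \<Longrightarrow> \<phi> g \<le> 0"
proof (induct g)
  case 0 then show ?case using const[of 0] by simp
next
  case (pCons a p)
  then have "\<phi> (pCons a p) \<le> max (\<phi> [:a:]) (s + \<phi> p)"
    using pCons_hyperadd by (simp add: trop_hyperadd_iff)
  also have "\<dots> \<le> 0"
    using pCons const[of a] s_neg by (cases s; cases "\<phi> p") auto
  finally show ?case .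
qed

lemma X_power: "\<phi> ([:0, 1:] ^ r) = ereal (real r) * s"
proof (induct r)
  case 0 then show ?case using const[of 1] by (simp add: one_pCons)
next
  case (Suc r)
  then have "\<phi> ([:0, 1:] ^ Suc r) = s + ereal (real r) * s"
    using mult[of "[:0, 1:]" "[:0, 1:] ^ r"] X kT_power[of "[:0, 1:]" r] by simp
  then show ?case using s_neg by (cases s) (auto simp: algebra_simps)
qed

lemma eq_0_if_coeff_0_nonzero: "u \<in> kT \<Longrightarrow> coeff u 0 \<noteq> 0 \<Longrightarrow> \<phi> u = 0"
proof (cases u)
  case (pCons a p)
  assume "u \<in> kT" "coeff u 0 \<noteq> 0"
  then have "a \<in> kQbar" "a \<noteq> 0" "p \<in> kT" using pCons by auto
  moreover have "s + \<phi> p < 0" using nonpos[of p] s_neg \<open>p \<in> kT\<close> by (cases s; cases "\<phi> p") auto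
  ultimately show "\<phi> u = 0"
    using pCons_hyperadd[of a p] const[of a] pCons by (simp add: trop_hyperadd_iff)
qed

lemma eq_f_pt:
  assumes "g \<in> kT"
  shows "\<phi> g = f_pt s g"
proof (cases "g = 0")
  case True then show ?thesis using const[of 0] assms by (simp add: f_pt_def)
next
  case False
  then obtain u where u: "g = [:0, 1:] ^ order 0 g * u" "\<not> [:0, 1:] dvd u"
    using order_decomp[of g 0] by auto
  then have "u \<in> kT" using assms kT_X_power_mult_cancel by metis
  moreover have "coeff u 0 \<noteq> 0" using u(2) by (simp add: dvd_iff_poly_eq_0 poly_0_coeff_0)
  ultimately have "\<phi> g = ereal (real (order 0 g)) * s"
    using mult[of "[:0, 1:] ^ order 0 g" u] X_power eq_0_if_coeff_0_nonzero kT_power[of "[:0, 1:]"] u(1)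
    by simp
  then show ?thesis using assms False by (simp add: f_pt_eq_order)
qed

end


section \<open>Pulling back valuations along k[T] \<rightarrow> k[X, Y]\<close>

locale kT_kTT_hom =
  fixes \<psi> :: "complex poly \<Rightarrow> complex poly poly"
  assumes zero: "\<psi> 0 = 0" and one: "\<psi> 1 = 1"
    and mult: "\<psi> (p * q) = \<psi> p * \<psi> q" and add: "\<psi> (p + q) = \<psi> p + \<psi> q"
    and const: "\<psi> [:a:] = [:[:a:]:]"
    and maps_kT: "p \<in> kT \<Longrightarrow> \<psi> p \<in> kTT"
begin

lemma trop_valuation_pullback_eq_f_pt:
  assumes "trop_valuation w" "\<And>a. a \<noteq> 0 \<Longrightarrow> w [:[:a:]:] = 0"
    and "w (\<psi> [:0, 1:]) = s" "s < 0" "g \<in> kT"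
  shows "w (\<psi> g) = f_pt s g"
proof -
  interpret w: trop_valuation w by fact
  interpret kT_trop_point "\<lambda>g. w (\<psi> g)" s
    using assms by unfold_locales (auto simp: mult add const w.mult w.add)
  show ?thesis using eq_f_pt assms(5) .
qed

end

lemma j2_pCons: "j2 (pCons a p) = pCons [:a:] (j2 p)"
  unfolding j2_def by (rule map_poly_pCons) simp

lemma j2_0: "j2 0 = 0"
  by (simp add: j2_def)

lemma j2_add: "j2 (p + q) = j2 p + j2 q"
  unfolding j2_def by (rule poly_eqI) (simp add: coeff_map_poly)

lemma j2_mult: "j2 (p * q) = j2 p * j2 q"
  by (induct p) (simp_all add: j2_def map_poly_smult j2_add[unfolded j2_def] map_poly_pCons)

interpretation j1: kT_kTT_hom j1
  by unfold_locales (auto simp: j1_def kTT_iff one_pCons coeff_pCons split: nat.splits)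

interpretation j2: kT_kTT_hom j2
proof
  show "j2 0 = 0" "j2 1 = 1" by (simp_all add: j2_def)
  show "j2 [:a:] = [:[:a:]:]" for a by (simp add: j2_pCons j2_0)
  show "j2 (p * q) = j2 p * j2 q" "j2 (p + q) = j2 p + j2 q" for p q by (rule j2_mult, rule j2_add)
  show "p \<in> kT \<Longrightarrow> j2 p \<in> kTT" for p
    by (auto simp: j2_def kT_def kTT_iff coeff_map_poly coeff_pCons split: nat.splits)
qed

lemma Delta_eq_pcompose: "Delta g = pcompose (j2 g) [:[:0, 1:], 1:]"
proof -
  have "map_poly (\<lambda>c. [:[:c:]:]) g = map_poly (\<lambda>q. [:q:]) (j2 g)"
    by (simp add: j2_def map_poly_map_poly o_def)
  then show ?thesis by (simp add: Delta_def pcompose_altdef)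
qed

interpretation Delta: kT_kTT_hom Delta
proof
  show "Delta 0 = 0" "Delta 1 = 1" "Delta [:a:] = [:[:a:]:]" for a
    by (simp_all add: Delta_eq_pcompose j2.zero j2.one j2.const pcompose_1)
  show "Delta (p * q) = Delta p * Delta q" "Delta (p + q) = Delta p + Delta q" for p q
    by (simp_all add: Delta_eq_pcompose j2.mult j2.add pcompose_mult pcompose_add)
  show "p \<in> kT \<Longrightarrow> Delta p \<in> kTT" for p
  proof (induct p)
    case (pCons a p)
    then have "[:[:a:]:] \<in> kTT" "Delta p \<in> kTT" "[:[:0, 1:], 1:] \<in> kTT"
      by (auto simp: kTT_iff coeff_pCons split: nat.splits)
    moreover have "Delta (pCons a p) = [:[:a:]:] + [:[:0, 1:], 1:] * Delta p"
      by (simp add: Delta_eq_pcompose j2_pCons pcompose_pCons)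
    ultimately show ?case by (metis kTT_add kTT_mult)
  qed (simp add: Delta_eq_pcompose j2.zero)
qed

lemma j1_X: "j1 [:0, 1:] = [:[:0, 1:]:]"
  by (simp add: j1_def)

lemma j2_X: "j2 [:0, 1:] = [:0, 1:]"
  by (simp add: j2_pCons j2_0 one_pCons)

lemma Delta_X: "Delta [:0, 1:] = [:[:0, 1:]:] + [:0, 1:]"
  by (simp add: Delta_eq_pcompose j2_X pcompose_pCons)


section \<open>Elements of f_x \<odot> f_y\<close>

lemma trop_hom_restrict:
  assumes "trop_valuation w" and "0 \<in> S" "1 \<in> S"
    and "\<And>x y. x \<in> S \<Longrightarrow> y \<in> S \<Longrightarrow> x + y \<in> S"
    and "\<And>x y. x \<in> S \<Longrightarrow> y \<in> S \<Longrightarrow> x * y \<in> S"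
    and "\<And>a. a \<in> kQbar \<Longrightarrow> c a \<in> S" "c 0 = 0" "\<And>a. a \<noteq> 0 \<Longrightarrow> w (c a) = 0"
  shows "trop_hom S c (\<lambda>x. if x \<in> S then w x else undefined)"
proof -
  interpret trop_valuation w by fact
  show ?thesis using assms not_PInf mult add unfolding trop_hom_def by auto
qed

lemma mem_berk_odot_if_trop_valuation:
  assumes w: "trop_valuation w" and const: "\<And>a. a \<noteq> 0 \<Longrightarrow> w [:[:a:]:] = 0"
    and wX: "w (j1 [:0, 1:]) = x" "w (j2 [:0, 1:]) = y" "w (Delta [:0, 1:]) = t"
    and neg: "x < 0" "y < 0" "t < 0"
  shows "f_pt t \<in> berk_odot (f_pt x) (f_pt y)"
proof -
  define \<beta> where "\<beta> = (\<lambda>P. if P \<in> kTT then w P else undefined)"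
  have \<beta>: "\<beta> \<in> HomB"
    unfolding HomB_def \<beta>_def using kTT_add kTT_mult const
    by (intro CollectI trop_hom_restrict[OF w]) auto
  have j1_eq: "\<beta> (j1 g) = f_pt x g" if "g \<in> kT" for g
    using j1.trop_valuation_pullback_eq_f_pt[OF w const wX(1) neg(1) that] j1.maps_kT[OF that]
    by (simp add: \<beta>_def)
  have j2_eq: "\<beta> (j2 g) = f_pt y g" if "g \<in> kT" for g
    using j2.trop_valuation_pullback_eq_f_pt[OF w const wX(2) neg(2) that] j2.maps_kT[OF that]
    by (simp add: \<beta>_def)
  have Delta_eq: "f_pt t g = \<beta> (Delta g)" if "g \<in> kT" for g
    using Delta.trop_valuation_pullback_eq_f_pt[OF w const wX(3) neg(3) that] Delta.maps_kT[OF that]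
    by (simp add: \<beta>_def)
  have "f_pt t \<in> HomA"
  proof -
    have "f_pt t = (\<lambda>g. if g \<in> kT then w (Delta g) else undefined)"
      using Delta.trop_valuation_pullback_eq_f_pt[OF w const wX(3) neg(3)] by (auto simp: f_pt_def)
    moreover have "trop_valuation (\<lambda>g. w (Delta g))"
      by (rule trop_valuation_comp[of w Delta, OF w Delta.zero Delta.one Delta.mult Delta.add])
    then have "trop_hom kT (\<lambda>a. [:a:]) (\<lambda>g. if g \<in> kT then w (Delta g) else undefined)"
      by (rule trop_hom_restrict) (auto simp: kT_add kT_mult const Delta.const)
    ultimately show ?thesis by (simp add: HomA_def)
  qed
  then show ?thesis unfolding berk_odot_def using \<beta> j1_eq j2_eq Delta_eq by blast
qed

lemma f_pt_max_mem_berk_odot: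
  fixes x y :: real
  assumes "x < 0" "y < 0" "x \<noteq> y"
  shows "f_pt (ereal (max x y)) \<in> berk_odot (f_pt (ereal x)) (f_pt (ereal y))"
proof -
  interpret ord0: trop_valuation "ord0_val x :: complex poly \<Rightarrow> ereal"
    by (rule trop_valuation_ord0_val) (use assms in simp)
  let ?w = "gauss_val (ord0_val x :: complex poly \<Rightarrow> ereal) y"
  interpret w: trop_valuation ?w by (rule ord0.trop_valuation_gauss_val)
  have const: "?w [:[:a:]:] = 0" if "a \<noteq> 0" for a
    using that by (simp add: ord0.gauss_val_const ord0_val_const)
  have X: "?w (j1 [:0, 1:]) = ereal x" and Y: "?w (j2 [:0, 1:]) = ereal y"
    by (simp_all add: j1_X j2_X ord0.gauss_val_const ord0_val_X ord0.gauss_val_X)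
  then have "?w (Delta [:0, 1:]) = ereal (max x y)"
    using w.add_eq_max[of "[:[:0, 1:]:]" "[:0, 1:]"] assms(3) by (simp add: Delta_X j1_X j2_X)
  from mem_berk_odot_if_trop_valuation[OF w.trop_valuation_axioms const X Y this]
  show ?thesis using assms by simp
qed

text \<open>Substituting Y - X for Y makes X and Y of equal value x while X + Y becomes Y,
  whose Gauss value t can be any real number up to x.\<close>

lemma f_pt_real_mem_berk_odot:
  fixes x t :: real
  assumes "x < 0" "t \<le> x"
  shows "f_pt (ereal t) \<in> berk_odot (f_pt (ereal x)) (f_pt (ereal x))"
proof -
  interpret ord0: trop_valuation "ord0_val x :: complex poly \<Rightarrow> ereal"
    by (rule trop_valuation_ord0_val) (use assms in simp)
  let ?q = "[:- [:0, 1:], 1:] :: complex poly poly"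
  let ?w = "\<lambda>P. gauss_val (ord0_val x :: complex poly \<Rightarrow> ereal) t (pcompose P ?q)"
  have w: "trop_valuation ?w"
    by (rule trop_valuation_comp[of _ "\<lambda>P. pcompose P ?q", OF ord0.trop_valuation_gauss_val])
      (simp_all add: pcompose_1 pcompose_mult pcompose_add)
  have const: "?w [:[:a:]:] = 0" if "a \<noteq> 0" for a
    using that by (simp add: ord0.gauss_val_const ord0_val_const)
  have X: "?w (j1 [:0, 1:]) = ereal x"
    by (simp add: j1_X ord0.gauss_val_const ord0_val_X)
  have Y: "?w (j2 [:0, 1:]) = ereal x"
    using assms by (simp add: j2_X pcompose_pCons ord0.gauss_val_linear ord0_val_X)
  have "?w (Delta [:0, 1:]) = ereal t"
    by (simp add: Delta_X pcompose_pCons ord0.gauss_val_X)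
  from mem_berk_odot_if_trop_valuation[OF w const X Y this]
  show ?thesis using assms by simp
qed

text \<open>Specialising Y to -X sends X + Y to 0.\<close>

lemma f_pt_MInf_mem_berk_odot:
  fixes x :: real
  assumes "x < 0"
  shows "f_pt (-\<infinity>) \<in> berk_odot (f_pt (ereal x)) (f_pt (ereal x))"
proof -
  let ?w = "\<lambda>P. ord0_val x (poly P (- [:0, 1:]) :: complex poly)"
  have w: "trop_valuation ?w"
    by (rule trop_valuation_comp[of _ "\<lambda>P. poly P (- [:0, 1:])", OF trop_valuation_ord0_val])
      (use assms in auto)
  have const: "?w [:[:a:]:] = 0" if "a \<noteq> 0" for a
    using that by (simp add: ord0_val_const)
  have "?w (j1 [:0, 1:]) = ereal x" "?w (j2 [:0, 1:]) = ereal x" "?w (Delta [:0, 1:]) = -\<infinity>"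
    by (simp_all add: j1_X j2_X Delta_X ord0_val_X)
  from mem_berk_odot_if_trop_valuation[OF w const this]
  show ?thesis using assms by simp
qed

lemma HomA_eq_f_pt:
  assumes "h \<in> HomA" "h [:0, 1:] < 0"
  shows "h = f_pt (h [:0, 1:])"
proof
  fix g
  have hom: "trop_hom kT (\<lambda>a. [:a:]) h" using assms(1) by (simp add: HomA_def)
  interpret kT_trop_point h "h [:0, 1:]"
  proof
    fix g k assume "g \<in> kT" "k \<in> kT"
    then show "h (g * k) = h g + h k" "h (g + k) \<in> trop_hyperadd (h g) (h k)"
      using hom unfolding trop_hom_def by blast+
  next
    fix a assume "a \<in> kQbar"
    then show "h [:a:] = (if a = 0 then -\<infinity> else 0)" using hom unfolding trop_hom_def by blast
  qed (use assms(2) in simp_all)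
  show "h g = f_pt (h [:0, 1:]) g"
  proof (cases "g \<in> kT")
    case True then show ?thesis by (rule eq_f_pt)
  next
    case False then show ?thesis using hom by (simp add: trop_hom_def f_pt_def)
  qed
qed

lemma trop_hyperadd_neg: "s \<in> trop_hyperadd x y \<Longrightarrow> x < 0 \<Longrightarrow> y < 0 \<Longrightarrow> s < 0"
  by (auto simp: trop_hyperadd_iff max_def)

lemma mem_berk_odot_f_pt_E:
  assumes "x < 0" "y < 0" "h \<in> berk_odot (f_pt x) (f_pt y)"
  obtains s where "h = f_pt s" "s \<in> trop_hyperadd x y"
proof -
  obtain \<beta> where h: "h \<in> HomA" and \<beta>: "\<beta> \<in> HomB"
    and j1_eq: "\<forall>a\<in>kT. \<beta> (j1 a) = f_pt x a" and j2_eq: "\<forall>a\<in>kT. \<beta> (j2 a) = f_pt y a"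
    and Delta_eq: "\<forall>a\<in>kT. h a = \<beta> (Delta a)"
    using assms(3) unfolding berk_odot_def by blast
  have "h [:0, 1:] = \<beta> (j1 [:0, 1:] + j2 [:0, 1:])"
    using Delta_eq by (simp add: Delta_X j1_X j2_X)
  also have "\<dots> \<in> trop_hyperadd (\<beta> (j1 [:0, 1:])) (\<beta> (j2 [:0, 1:]))"
    using \<beta> j1.maps_kT j2.maps_kT unfolding HomB_def trop_hom_def by simp
  finally have s: "h [:0, 1:] \<in> trop_hyperadd x y"
    using j1_eq j2_eq by (simp add: f_pt_X)
  then have "h = f_pt (h [:0, 1:])"
    using h assms(1,2) trop_hyperadd_neg by (intro HomA_eq_f_pt) auto
  then show thesis using s that by blast
qed

lemma f_pt_neg_iff_X_dvd:
  assumes "s < 0" "g \<in> kT"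
  shows "f_pt s g < 0 \<longleftrightarrow> (\<exists>q\<in>kT. g = [:0, 1:] * q)"
proof (cases "g = 0")
  case True then show ?thesis using assms by (auto simp: f_pt_def)
next
  case False
  have "f_pt s g < 0 \<longleftrightarrow> order 0 g \<noteq> 0"
    using assms False by (cases s) (auto simp: f_pt_eq_order mult_less_0_iff)
  also have "\<dots> \<longleftrightarrow> coeff g 0 = 0"
    using False order_root[of g 0] by (simp add: poly_0_coeff_0)
  also have "\<dots> \<longleftrightarrow> (\<exists>q\<in>kT. g = [:0, 1:] * q)"
    using assms(2) by (cases g) auto
  finally show ?thesis .
qed


lemma mem_berk_odot_f_pt_neg_iff:
  assumes "x < 0" "y < 0" "h \<in> berk_odot (f_pt x) (f_pt y)"
  shows "{g\<in>kT. h g < 0} = {g. \<exists>q\<in>kT. g = [:0, 1:] * q}"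
proof -
  obtain s where s: "h = f_pt s" "s \<in> trop_hyperadd x y"
    using mem_berk_odot_f_pt_E[OF assms] by blast
  have "s < 0" using trop_hyperadd_neg[OF s(2) assms(1,2)] .
  moreover have "g \<in> kT" if "\<exists>q\<in>kT. g = [:0, 1:] * q" for g
    using that kT_mult kT_X by blast
  ultimately show ?thesis using s(1) f_pt_neg_iff_X_dvd by blast
qed

lemma berk_odot_f_pt_distinct:
  fixes x y :: real
  assumes "x < 0" "y < 0" "x \<noteq> y"
  shows "berk_odot (f_pt (ereal x)) (f_pt (ereal y)) = {f_pt (ereal (max x y))}"
proof -
  have "trop_hyperadd (ereal x) (ereal y) = {ereal (max x y)}"
    using assms(3) by (simp add: trop_hyperadd_def)
  then have "berk_odot (f_pt (ereal x)) (f_pt (ereal y)) \<subseteq> {f_pt (ereal (max x y))}"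
    using mem_berk_odot_f_pt_E[of "ereal x" "ereal y"] assms(1,2) by force
  then show ?thesis using f_pt_max_mem_berk_odot[OF assms] by blast
qed

lemma berk_odot_f_pt_same:
  fixes x :: real
  assumes "x < 0"
  shows "berk_odot (f_pt (ereal x)) (f_pt (ereal x)) = {f_pt t | t. t \<le> ereal x}"
proof
  have "trop_hyperadd (ereal x) (ereal x) = {t. t \<le> ereal x}"
    by (simp add: trop_hyperadd_def)
  then show "berk_odot (f_pt (ereal x)) (f_pt (ereal x)) \<subseteq> {f_pt t | t. t \<le> ereal x}"
    using mem_berk_odot_f_pt_E[of "ereal x" "ereal x"] assms by force
  show "{f_pt t | t. t \<le> ereal x} \<subseteq> berk_odot (f_pt (ereal x)) (f_pt (ereal x))"
  proof clarify
    fix t assume "t \<le> ereal x"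
    then show "f_pt t \<in> berk_odot (f_pt (ereal x)) (f_pt (ereal x))"
      using assms f_pt_real_mem_berk_odot f_pt_MInf_mem_berk_odot by (cases t) auto
  qed
qed

theorem lemma5p27:
  fixes x y :: real
  assumes "x < 0" and "y < 0"
  shows "(\<forall>h\<in>berk_odot (f_pt (ereal x)) (f_pt (ereal y)).
            {g\<in>kT. h g < 0} = {g. \<exists>q\<in>kT. g = [:0, 1:] * q}) \<and>
         berk_odot (f_pt (ereal x)) (f_pt (ereal y)) =
           (if x \<noteq> y then {f_pt (ereal (max x y))}
            else {f_pt t | t. t \<le> ereal x})"
proof (intro conjI ballI)
  show "{g\<in>kT. h g < 0} = {g. \<exists>q\<in>kT. g = [:0, 1:] * q}"
    if "h \<in> berk_odot (f_pt (ereal x)) (f_pt (ereal y))" for h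
    using mem_berk_odot_f_pt_neg_iff[OF _ _ that] assms by simp
  show "berk_odot (f_pt (ereal x)) (f_pt (ereal y)) =
      (if x \<noteq> y then {f_pt (ereal (max x y))} else {f_pt t | t. t \<le> ereal x})"
    using berk_odot_f_pt_distinct[OF assms] berk_odot_f_pt_same[OF assms(1)] by auto
qed

end
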